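(* Let $\ell\ge 0$ be an integer. Each of the following two $2\times(2\ell+3)$ matrices, listed column by column, is a $(2,2\ell+3,1)$-tropical code within maximum delay $\ell$: (1) the columns $(0,\infty),(0,\ell),(0,\ell-1),\dots,(0,1),(0,0),(1,0),(2,0),\dots,(\ell,0),(\infty,0)$; (2) the columns $(0,\infty)$, then $(i,\ell-i)$ for $i=0,\dots,\ell$ interleaved with $(i,\ell-i+1)$ for $i=1,\dots,\ell$ in the order $(0,\ell),(1,\ell),(1,\ell-1),(2,\ell-1),\dots,(\ell-1,1),(\ell,1),(\ell,0)$, and finally $(\infty,0)$. (Each pair $(u,v)$ denotes the column with first entry $u$ and second entry $v$.)
   Context: Tropical arithmetic on $\mathbb{R}\cup\{\infty\}$: $x\oplus y=\min(x,y)$, $x\odot y=x+y$, with $x\oplus\infty=x$ and $x\odot\infty=\infty$. For a matrix $S$ with $T$ rows and $N$ columns and a column vector $\mathbf{x}$ of length $N$, $S\odot\mathbf{x}$ is the vector whose $t$-th entry is $\min_{j}(S_{tj}+x_j)$. A $(T,N,D)$-tropical code is a matrix $S\in(\{0\}\cup\mathbb{N}\cup\{\infty\})^{T\times N}$ such that for any two distinct vectors $\mathbf{x},\mathbf{y}\in(\{0\}\cup\mathbb{N}\cup\{\infty\})^{N}$, each having at most $D$ finite entries, $S\odot\mathbf{x}\ne S\odot\mathbf{y}$. It is within maximum delay $\ell$ if $S\in\{0,1,\dots,\ell,\infty\}^{T\times N}$. *)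

theory Defs
  imports Main "HOL-Library.Extended_Nat"
begin

text \<open>Values in {0} \<union> \<nat> \<union> {\<infinity>} are modelled by enat; tropical addition is min,
  tropical multiplication is +.\<close>

definition trop_mult :: "nat \<Rightarrow> nat \<Rightarrow> (nat \<Rightarrow> nat \<Rightarrow> enat) \<Rightarrow> enat list \<Rightarrow> enat list" where
  "trop_mult T N S x = map (\<lambda>t. INF j\<in>{..<N}. S t j + x ! j) [0..<T]"

definition num_finite :: "enat list \<Rightarrow> nat" where
  "num_finite x = card {j. j < length x \<and> x ! j \<noteq> \<infinity>}"

definition tropical_code :: "nat \<Rightarrow> nat \<Rightarrow> nat \<Rightarrow> (nat \<Rightarrow> nat \<Rightarrow> enat) \<Rightarrow> bool" where
  "tropical_code T N D S \<longleftrightarrow>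
     (\<forall>x y. length x = N \<longrightarrow> length y = N \<longrightarrow> num_finite x \<le> D \<longrightarrow> num_finite y \<le> D
        \<longrightarrow> x \<noteq> y \<longrightarrow> trop_mult T N S x \<noteq> trop_mult T N S y)"

definition within_delay :: "nat \<Rightarrow> nat \<Rightarrow> nat \<Rightarrow> (nat \<Rightarrow> nat \<Rightarrow> enat) \<Rightarrow> bool" where
  "within_delay T N l S \<longleftrightarrow> (\<forall>t<T. \<forall>j<N. S t j = \<infinity> \<or> S t j \<le> enat l)"

definition cols_matrix :: "(enat \<times> enat) list \<Rightarrow> nat \<Rightarrow> nat \<Rightarrow> enat" where
  "cols_matrix cs t j = (if t = 0 then fst (cs ! j) else snd (cs ! j))"

definition code1_cols :: "nat \<Rightarrow> (enat \<times> enat) list" where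
  "code1_cols l = [(0, \<infinity>)] @ map (\<lambda>k. (0, enat (l - k))) [0..<l+1]
                 @ map (\<lambda>i. (enat i, 0)) [1..<l+1] @ [(\<infinity>, 0)]"

definition code2_cols :: "nat \<Rightarrow> (enat \<times> enat) list" where
  "code2_cols l = [(0, \<infinity>), (0, enat l)]
     @ concat (map (\<lambda>i. [(enat i, enat (l - i + 1)), (enat i, enat (l - i))]) [1..<l+1])
     @ [(\<infinity>, 0)]"

end

theory Submission
  imports Defs "HOL-Library.Extended_Real"
begin

text \<open>A vector with at most one finite entry a, in position j, is mapped to column j of the
  code shifted by a. So a code for D = 1 only needs columns that are not entirely \<infinity>
  and whose shifts are pairwise distinct. For two rows, a shift leaves the slope v - u of a
  column (u, v) unchanged, and in both codes the slopes are \<infinity>, l, l - 1, ..., -l, -\<infinity>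
  from left to right, hence pairwise distinct.\<close>

lemma num_finite_le_1_cases:
  assumes "length x = N" "num_finite x \<le> 1"
  obtains "x = replicate N \<infinity>" | j a where "j < N" "x = (replicate N \<infinity>)[j := enat a]"
proof (cases "\<exists>j<N. x ! j \<noteq> \<infinity>")
  case False
  then have "x = replicate N \<infinity>" using assms(1) by (simp add: list_eq_iff_nth_eq)
  then show ?thesis by (rule that(1))
next
  case True
  then obtain j a where j: "j < N" "x ! j = enat a" by auto
  have others: "x ! k = \<infinity>" if "k < N" "k \<noteq> j" for k
  proof (rule ccontr)
    assume "x ! k \<noteq> \<infinity>"
    then have "{j, k} \<subseteq> {i. i < length x \<and> x ! i \<noteq> \<infinity>}" using j that assms(1) by auto
    then have "card {j, k} \<le> num_finite x" unfolding num_finite_def by (intro card_mono) auto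
    then show False using that assms(2) by simp
  qed
  have "x = (replicate N \<infinity>)[j := enat a]"
    using assms(1) j others by (auto simp: list_eq_iff_nth_eq nth_list_update)
  with \<open>j < N\<close> show ?thesis by (rule that(2))
qed

lemma trop_mult_replicate_infinity: "trop_mult T N S (replicate N \<infinity>) = replicate T \<infinity>"
proof -
  have "(INF k\<in>{..<N}. S t k + replicate N \<infinity> ! k) = \<infinity>" for t
    by (rule antisym[OF _ INF_greatest]) auto
  then show ?thesis by (simp add: trop_mult_def map_replicate_const)
qed

lemma trop_mult_single_finite:
  assumes "j < N"
  shows "trop_mult T N S ((replicate N \<infinity>)[j := enat a]) = map (\<lambda>t. S t j + enat a) [0..<T]"
proof -
  have "(INF k\<in>{..<N}. S t k + (replicate N \<infinity>)[j := enat a] ! k) = S t j + enat a" for t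
  proof (rule antisym)
    show "(INF k\<in>{..<N}. S t k + (replicate N \<infinity>)[j := enat a] ! k) \<le> S t j + enat a"
      using assms by (intro INF_lower2[of j]) auto
    show "S t j + enat a \<le> (INF k\<in>{..<N}. S t k + (replicate N \<infinity>)[j := enat a] ! k)"
      using assms by (intro INF_greatest) (auto simp: nth_list_update)
  qed
  then show ?thesis by (simp add: trop_mult_def)
qed

lemma tropical_code_1I:
  assumes column_finite: "\<And>j. j < N \<Longrightarrow> \<exists>t<T. S t j \<noteq> \<infinity>"
    and shifts_inj: "\<And>j j' a a'. j < N \<Longrightarrow> j' < N \<Longrightarrow>
           (\<And>t. t < T \<Longrightarrow> S t j + enat a = S t j' + enat a') \<Longrightarrow> j = j' \<and> a = a'"
  shows "tropical_code T N 1 S"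
  unfolding tropical_code_def
proof (intro allI impI)
  fix x y :: "enat list"
  assume x: "length x = N" "num_finite x \<le> 1" and y: "length y = N" "num_finite y \<le> 1"
    and "x \<noteq> y"
  have shifted_not_infinity: "map (\<lambda>t. S t j + enat a) [0..<T] \<noteq> replicate T \<infinity>"
    if "j < N" for j a
    using column_finite[OF that] by (auto simp: list_eq_iff_nth_eq)
  show "trop_mult T N S x \<noteq> trop_mult T N S y"
  proof (cases rule: num_finite_le_1_cases[OF x])
    case 1
    then show ?thesis
    proof (cases rule: num_finite_le_1_cases[OF y])
      case 1
      then show ?thesis using \<open>x = _\<close> \<open>x \<noteq> y\<close> by simp
    next
      case (2 j' a')
      then show ?thesis using \<open>x = _\<close> shifted_not_infinity[of j' a']
        by (simp add: trop_mult_replicate_infinity trop_mult_single_finite)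
    qed
  next
    case (2 j a)
    show ?thesis
    proof (cases rule: num_finite_le_1_cases[OF y])
      case 1
      then show ?thesis using 2 shifted_not_infinity[of j a]
        by (simp add: trop_mult_replicate_infinity trop_mult_single_finite)
    next
      case (2 j' a')
      show ?thesis
      proof
        assume "trop_mult T N S x = trop_mult T N S y"
        then have "S t j + enat a = S t j' + enat a'" if "t < T" for t
          using that \<open>j < N\<close> \<open>j' < N\<close> \<open>x = _\<close> \<open>y = _\<close>
          by (simp add: trop_mult_single_finite list_eq_iff_nth_eq)
        then have "j = j' \<and> a = a'" using shifts_inj \<open>j < N\<close> \<open>j' < N\<close> by blast
        then show False using \<open>x \<noteq> y\<close> \<open>x = _\<close> \<open>y = _\<close> by simp
      qed
    qed
  qed
qed

text \<open>A column (u, \<infinity>) has slope \<infinity> and a column (\<infinity>, v) slope -\<infinity>; the column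
  (\<infinity>, \<infinity>) gets the junk slope \<infinity>, which is why it is excluded below.\<close>

definition column_slope :: "enat \<times> enat \<Rightarrow> ereal" where
  "column_slope c = ereal_of_enat (snd c) - ereal_of_enat (fst c)"

lemma column_slope_shift_invariant:
  assumes "c \<noteq> (\<infinity>, \<infinity>)" "c' \<noteq> (\<infinity>, \<infinity>)"
    and "fst c + enat a = fst c' + enat a'" "snd c + enat a = snd c' + enat a'"
  shows "column_slope c = column_slope c'"
  using assms unfolding column_slope_def
  by (cases c; cases c') (auto simp: ereal_of_enat_def plus_enat_def split: enat.splits)

lemma tropical_code_2_1_if_distinct_slopes:
  assumes "length cs = N" "(\<infinity>, \<infinity>) \<notin> set cs" and distinct_slopes: "distinct (map column_slope cs)"
  shows "tropical_code 2 N 1 (cols_matrix cs)"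
proof (rule tropical_code_1I)
  fix j assume "j < N"
  then have "cs ! j \<noteq> (\<infinity>, \<infinity>)" using assms(1,2) nth_mem by metis
  then show "\<exists>t<2. cols_matrix cs t j \<noteq> \<infinity>"
    by (cases "cs ! j") (auto simp: cols_matrix_def)
next
  fix j j' a a'
  assume j: "j < N" "j' < N"
    and rows_eq: "\<And>t. t < 2 \<Longrightarrow> cols_matrix cs t j + enat a = cols_matrix cs t j' + enat a'"
  have shifts_eq: "fst (cs ! j) + enat a = fst (cs ! j') + enat a'"
      "snd (cs ! j) + enat a = snd (cs ! j') + enat a'"
    using rows_eq[of 0] rows_eq[of 1] by (simp_all add: cols_matrix_def)
  have finite_column: "cs ! i \<noteq> (\<infinity>, \<infinity>)" if "i < N" for i
    using that assms(1,2) nth_mem by metis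
  have "column_slope (cs ! j) = column_slope (cs ! j')"
    using column_slope_shift_invariant[OF finite_column finite_column shifts_eq] j by blast
  then have "j = j'"
    using distinct_slopes j assms(1) by (metis length_map nth_map nth_eq_iff_index_eq)
  moreover have "a = a'"
    using finite_column[OF \<open>j < N\<close>] shifts_eq \<open>j = j'\<close>
    by (cases "cs ! j") (auto simp: enat_add_left_cancel)
  ultimately show "j = j' \<and> a = a'" ..
qed

lemma within_delay_cols_matrixI:
  assumes "set cs \<subseteq> insert \<infinity> {..enat l} \<times> insert \<infinity> {..enat l}" "length cs = N"
  shows "within_delay 2 N l (cols_matrix cs)"
  using assms by (fastforce simp: within_delay_def cols_matrix_def dest!: nth_mem)

lemma distinct_code_slopes:
  "distinct (\<infinity> # map (\<lambda>k. ereal (real l - real k)) [0..<n] @ [-\<infinity>])"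
  by (auto simp: distinct_map inj_on_def)

lemma code1_cols_slopes:
  "map column_slope (code1_cols l) = \<infinity> # map (\<lambda>k. ereal (real l - real k)) [0..<2*l+1] @ [-\<infinity>]"
proof -
  have "[0..<2*l+1] = [0..<l+1] @ map (\<lambda>i. l + i) [1..<l+1]"
    by (simp add: list_eq_iff_nth_eq nth_append del: upt_Suc)
  then show ?thesis
    by (simp add: code1_cols_def column_slope_def zero_enat_def del: upt_Suc)
qed

lemma concat_map_pairs_upt:
  "concat (map (\<lambda>i. [f (2*i - 1), f (2*i)]) [1..<n+1]) = map f [1..<2*n+1]"
  by (induction n) (simp_all add: ac_simps)

lemma code2_cols_slopes:
  "map column_slope (code2_cols l) = \<infinity> # map (\<lambda>k. ereal (real l - real k)) [0..<2*l+1] @ [-\<infinity>]"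
proof -
  let ?f = "\<lambda>k. ereal (real l - real k)"
  have "map column_slope (concat (map (\<lambda>i. [(enat i, enat (l - i + 1)), (enat i, enat (l - i))]) [1..<l+1]))
     = concat (map (\<lambda>i. [?f (2*i - 1), ?f (2*i)]) [1..<l+1])"
    by (auto simp: map_concat column_slope_def of_nat_diff intro!: arg_cong[where f=concat])
  also have "\<dots> = map ?f [1..<2*l+1]" by (rule concat_map_pairs_upt)
  finally show ?thesis
    by (simp add: code2_cols_def column_slope_def zero_enat_def upt_rec[of 0] del: upt_Suc)
qed

lemma length_code1_cols: "length (code1_cols l) = 2*l+3"
  by (simp add: code1_cols_def)

lemma length_code2_cols: "length (code2_cols l) = 2*l+3"
  using arg_cong[OF code2_cols_slopes, of length] by simp

lemma code1_cols_bounded: "set (code1_cols l) \<subseteq> insert \<infinity> {..enat l} \<times> insert \<infinity> {..enat l}"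
  by (auto simp: code1_cols_def)

lemma code2_cols_bounded: "set (code2_cols l) \<subseteq> insert \<infinity> {..enat l} \<times> insert \<infinity> {..enat l}"
  by (auto simp: code2_cols_def)

lemma infinite_column_notin_code_cols:
  "(\<infinity>, \<infinity>) \<notin> set (code1_cols l)" "(\<infinity>, \<infinity>) \<notin> set (code2_cols l)"
  by (auto simp: code1_cols_def code2_cols_def)

theorem mainTheorem2:
  fixes l :: nat
  shows "length (code1_cols l) = 2*l+3 \<and> tropical_code 2 (2*l+3) 1 (cols_matrix (code1_cols l))
           \<and> within_delay 2 (2*l+3) l (cols_matrix (code1_cols l))
         \<and> length (code2_cols l) = 2*l+3 \<and> tropical_code 2 (2*l+3) 1 (cols_matrix (code2_cols l))
           \<and> within_delay 2 (2*l+3) l (cols_matrix (code2_cols l))"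
proof -
  have "distinct (map column_slope (code1_cols l))" "distinct (map column_slope (code2_cols l))"
    by (simp_all only: code1_cols_slopes code2_cols_slopes distinct_code_slopes)
  then show ?thesis
    by (intro conjI length_code1_cols length_code2_cols
        tropical_code_2_1_if_distinct_slopes[OF length_code1_cols infinite_column_notin_code_cols(1)]
        tropical_code_2_1_if_distinct_slopes[OF length_code2_cols infinite_column_notin_code_cols(2)]
        within_delay_cols_matrixI[OF code1_cols_bounded length_code1_cols]
        within_delay_cols_matrixI[OF code2_cols_bounded length_code2_cols])
qed

end
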